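(* Let $D$ be a finite digraph and let $k$ be a positive integer. Then $\pi_k(D) \leq \alpha'_k(D)$ and $\chi'_k(D) \leq \lambda_k(D)$.
   Context: Paths are directed paths. A path partition of $D$ is a collection of vertex-disjoint paths of $D$ covering $V(D)$. The $k$-norm of a path partition $\mathcal{P}$ is $|\mathcal{P}|_k=\sum_{P\in\mathcal{P}}\min\{|V(P)|,k\}$, and $\pi_k(D)$ is the minimum $k$-norm over all path partitions of $D$. A partial $k$-dicoloring of $D$ is a collection $\{S_1,\dots,S_k\}$ of $k$ pairwise disjoint vertex sets of $D$ each of which induces an acyclic subdigraph; $\alpha'_k(D)$ is the maximum number of vertices covered by a partial $k$-dicoloring of $D$. A dicoloring of $D$ is a partition of $V(D)$ into sets each inducing an acyclic subdigraph; the $k$-norm of a dicoloring $\mathcal{S}$ is $|\mathcal{S}|_k=\sum_{S\in\mathcal{S}}\min\{|S|,k\}$, and $\chi'_k(D)$ is the minimum $k$-norm over all dicolorings of $D$. A $k$-pack is a collection of $k$ vertex-disjoint paths of $D$; $\lambda_k(D)$ is the maximum number of vertices covered by a $k$-pack of $D$. *)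

theory Defs
  imports Main
begin

definition digraph :: "'a set \<Rightarrow> 'a rel \<Rightarrow> bool" where
  "digraph V A \<longleftrightarrow> finite V \<and> A \<subseteq> V \<times> V \<and> (\<forall>v. (v, v) \<notin> A)"

definition is_path :: "'a set \<Rightarrow> 'a rel \<Rightarrow> 'a list \<Rightarrow> bool" where
  "is_path V A P \<longleftrightarrow> P \<noteq> [] \<and> distinct P \<and> set P \<subseteq> V \<and>
     (\<forall>i. Suc i < length P \<longrightarrow> (P ! i, P ! Suc i) \<in> A)"

definition path_partition :: "'a set \<Rightarrow> 'a rel \<Rightarrow> 'a list set \<Rightarrow> bool" where
  "path_partition V A \<P> \<longleftrightarrow> (\<forall>P\<in>\<P>. is_path V A P) \<and>
     (\<forall>P\<in>\<P>. \<forall>Q\<in>\<P>. P \<noteq> Q \<longrightarrow> set P \<inter> set Q = {}) \<and>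
     (\<Union>P\<in>\<P>. set P) = V"

definition path_knorm :: "nat \<Rightarrow> 'a list set \<Rightarrow> nat" where
  "path_knorm k \<P> = (\<Sum>P\<in>\<P>. min (length P) k)"

definition pi_k :: "nat \<Rightarrow> 'a set \<Rightarrow> 'a rel \<Rightarrow> nat" where
  "pi_k k V A = Min {path_knorm k \<P> | \<P>. path_partition V A \<P>}"

definition acyclic_set :: "'a set \<Rightarrow> 'a rel \<Rightarrow> 'a set \<Rightarrow> bool" where
  "acyclic_set V A S \<longleftrightarrow> S \<subseteq> V \<and> acyclic (A \<inter> (S \<times> S))"

definition partial_dicoloring :: "nat \<Rightarrow> 'a set \<Rightarrow> 'a rel \<Rightarrow> (nat \<Rightarrow> 'a set) \<Rightarrow> bool" where
  "partial_dicoloring k V A S \<longleftrightarrow> (\<forall>i<k. acyclic_set V A (S i)) \<and>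
     (\<forall>i<k. \<forall>j<k. i \<noteq> j \<longrightarrow> S i \<inter> S j = {})"

definition alpha'_k :: "nat \<Rightarrow> 'a set \<Rightarrow> 'a rel \<Rightarrow> nat" where
  "alpha'_k k V A = Max {card (\<Union>i<k. S i) | S. partial_dicoloring k V A S}"

definition dicoloring :: "'a set \<Rightarrow> 'a rel \<Rightarrow> 'a set set \<Rightarrow> bool" where
  "dicoloring V A \<S> \<longleftrightarrow> (\<forall>S\<in>\<S>. S \<noteq> {} \<and> acyclic_set V A S) \<and>
     (\<forall>S\<in>\<S>. \<forall>T\<in>\<S>. S \<noteq> T \<longrightarrow> S \<inter> T = {}) \<and> \<Union>\<S> = V"

definition col_knorm :: "nat \<Rightarrow> 'a set set \<Rightarrow> nat" where
  "col_knorm k \<S> = (\<Sum>S\<in>\<S>. min (card S) k)"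

definition chi'_k :: "nat \<Rightarrow> 'a set \<Rightarrow> 'a rel \<Rightarrow> nat" where
  "chi'_k k V A = Min {col_knorm k \<S> | \<S>. dicoloring V A \<S>}"

text \<open>k-pack: k vertex-disjoint paths P_0, ..., P_{k-1}; an empty list stands for an
  absent path (so a k-pack is at most k paths, which matters only when |V| < k).\<close>
definition k_pack :: "nat \<Rightarrow> 'a set \<Rightarrow> 'a rel \<Rightarrow> (nat \<Rightarrow> 'a list) \<Rightarrow> bool" where
  "k_pack k V A P \<longleftrightarrow> (\<forall>i<k. P i = [] \<or> is_path V A (P i)) \<and>
     (\<forall>i<k. \<forall>j<k. i \<noteq> j \<longrightarrow> set (P i) \<inter> set (P j) = {})"

definition lambda_k :: "nat \<Rightarrow> 'a set \<Rightarrow> 'a rel \<Rightarrow> nat" where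
  "lambda_k k V A = Max {card (\<Union>i<k. set (P i)) | P. k_pack k V A P}"

end

theory Submission
  imports Defs
begin

text \<open>Every finite digraph has a path partition P together with a levelling h, where h v is the
  number of vertices following v on its path, such that every level h -` {i} induces an acyclic
  subdigraph. It is built depth-first: for a root r, the vertices reachable from r other than r are
  levelled so that a longest path starts at an out-neighbour of r, and r is prepended to that path,
  so that r is alone on the top level; the vertices not reachable from r are levelled separately,
  and since no arc leaves the reachable part, putting two acyclic levels side by side keeps them
  acyclic.

  The levels below k form a partial k-dicoloring covering exactly |P|_k vertices, whence
  pi_k <= alpha'_k. All levels together form a dicoloring, and level i meets the k longest paths of
  P in at least min |h -` {i}| k vertices, so the k-norm of this dicoloring is at most the number of
  vertices covered by these k paths, whence chi'_k <= lambda_k.\<close>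

lemma acyclic_Un_one_way:
  assumes "acyclic (Restr E X)" and "acyclic (Restr E Y)" and "E \<inter> X \<times> Y = {}"
  shows "acyclic (Restr E (X \<union> Y))"
proof (rule acyclicI, intro allI notI)
  let ?R = "Restr E (X \<union> Y)"
  have stay_X: "(a, b) \<in> (Restr E X)\<^sup>+" if "(a, b) \<in> ?R\<^sup>+" "a \<in> X" for a b
    using that
  proof (induction rule: trancl_induct)
    case (base b)
    then show ?case using assms(3) by blast
  next
    case (step b c)
    from step.IH[OF step.prems] have "b \<in> X" by (blast elim: tranclE)
    with step.hyps(2) assms(3) have "(b, c) \<in> Restr E X" by blast
    with step.IH[OF step.prems] show ?case by (rule trancl_into_trancl)
  qed
  have stay_Y: "(a, b) \<in> (Restr E Y)\<^sup>+" if "(a, b) \<in> ?R\<^sup>+" "b \<in> Y" for a b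
    using that
  proof (induction rule: converse_trancl_induct)
    case (base a)
    then show ?case using assms(3) by blast
  next
    case (step a b)
    from step.IH[OF step.prems] have "b \<in> Y" by (blast elim: converse_tranclE)
    with step.hyps(1) assms(3) have "(a, b) \<in> Restr E Y" by blast
    then show ?case using step.IH[OF step.prems] by (rule trancl_into_trancl2)
  qed
  fix x assume cycle: "(x, x) \<in> ?R\<^sup>+"
  then have "x \<in> X \<union> Y" by (blast elim: tranclE)
  then show False
    using stay_X[OF cycle] stay_Y[OF cycle] assms(1,2) unfolding acyclic_def by blast
qed

lemma rtrancl_Image_minus_root:
  fixes E :: "'a rel" and a :: 'a
  defines "T \<equiv> E\<^sup>* `` {a} - {a}"
  shows "T \<subseteq> (Restr E T)\<^sup>* `` (E `` {a} - {a})"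
proof
  fix v assume "v \<in> T"
  have "v = a \<or> v \<in> (Restr E T)\<^sup>* `` (E `` {a} - {a})" if "(a, v) \<in> E\<^sup>*" for v
    using that
  proof (induction rule: rtrancl_induct)
    case (step u v)
    have "v = a \<or> v \<in> T" using step.hyps unfolding T_def by (blast intro: rtrancl_into_rtrancl)
    moreover have "u = a \<or> u \<in> T" using step.hyps(1) unfolding T_def by blast
    ultimately show ?case
      using step.IH step.hyps(2) by (blast intro: rtrancl_into_rtrancl)
  qed simp
  with \<open>v \<in> T\<close> show "v \<in> (Restr E T)\<^sup>* `` (E `` {a} - {a})" unfolding T_def by blast
qed

lemma rtrancl_avoiding_closed:
  assumes "E `` T \<subseteq> T" and "(s, v) \<in> E\<^sup>*" and "v \<notin> T"
  shows "(s, v) \<in> (Restr E (- T))\<^sup>* \<and> s \<notin> T"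
  using assms(2)
proof (induction rule: converse_rtrancl_induct)
  case (step s z)
  then have "s \<notin> T" using assms(1) by blast
  with step show ?case by (blast intro: converse_rtrancl_into_rtrancl)
qed (use assms(3) in simp)

lemma is_path_mono: "is_path V A Q \<Longrightarrow> V \<subseteq> V' \<Longrightarrow> is_path V' A Q"
  unfolding is_path_def by blast

lemma is_path_Cons:
  assumes "is_path V A Q" and "r \<in> V" and "r \<notin> set Q" and "(r, hd Q) \<in> A"
  shows "is_path V A (r # Q)"
  using assms unfolding is_path_def by (auto simp: hd_conv_nth nth_Cons split: nat.split)

lemma path_partitionD:
  assumes "path_partition W A P"
  shows "Q \<in> P \<Longrightarrow> is_path W A Q"
    and "Q \<in> P \<Longrightarrow> Q' \<in> P \<Longrightarrow> Q \<noteq> Q' \<Longrightarrow> set Q \<inter> set Q' = {}"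
    and "Q \<in> P \<Longrightarrow> set Q \<subseteq> W"
    and "(\<Union>Q\<in>P. set Q) = W"
  using assms unfolding path_partition_def by blast+

lemma path_partition_finite_lists:
  assumes "finite V" and "path_partition V A P"
  shows "P \<subseteq> {xs. set xs \<subseteq> V \<and> length xs \<le> card V}"
proof
  fix Q assume "Q \<in> P"
  then have "distinct Q" "set Q \<subseteq> V"
    using assms(2) unfolding path_partition_def is_path_def by blast+
  then show "Q \<in> {xs. set xs \<subseteq> V \<and> length xs \<le> card V}"
    using assms(1) by (simp add: card_mono flip: distinct_card)
qed

lemma finite_path_partition: "finite V \<Longrightarrow> path_partition V A P \<Longrightarrow> finite P"
  using path_partition_finite_lists finite_lists_length_le by (rule finite_subset)

lemma finite_path_partitions: "finite V \<Longrightarrow> finite {P. path_partition V A P}"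
  by (rule finite_subset[of _ "Pow {xs. set xs \<subseteq> V \<and> length xs \<le> card V}"])
    (auto dest: path_partition_finite_lists intro: finite_lists_length_le)

lemma path_partition_Un:
  assumes "path_partition T A PT" and "path_partition R A PR" and "T \<inter> R = {}"
  shows "path_partition (T \<union> R) A (PT \<union> PR)"
proof -
  have "set Q \<inter> set Q' = {}" if "Q \<in> PT" "Q' \<in> PR" for Q Q'
    using that assms unfolding path_partition_def by blast
  with assms show ?thesis
    unfolding path_partition_def by (metis Int_commute Un_iff UN_Un is_path_mono sup_ge1 sup_ge2)
qed

lemma path_partition_prepend:
  assumes "path_partition W A P" and "Q \<in> P" and "r \<notin> W" and "(r, hd Q) \<in> A"
  shows "path_partition (insert r W) A (insert (r # Q) (P - {Q}))"
  unfolding path_partition_def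
proof (intro conjI ballI impI)
  have paths: "is_path (insert r W) A Q'" if "Q' \<in> P" for Q'
    using path_partitionD(1)[OF assms(1) that] by (rule is_path_mono) blast
  have "r \<notin> set Q"
    using path_partitionD(3)[OF assms(1,2)] assms(3) by blast
  then have "is_path (insert r W) A (r # Q)"
    using paths[OF assms(2)] assms(4) by (simp add: is_path_Cons)
  moreover fix Q1 assume "Q1 \<in> insert (r # Q) (P - {Q})"
  ultimately show "is_path (insert r W) A Q1"
    using paths by blast
next
  have disjoint_new: "set (r # Q) \<inter> set Q' = {}" if "Q' \<in> P - {Q}" for Q'
  proof -
    have "r \<notin> set Q'" using that path_partitionD(3)[OF assms(1)] assms(3) by blast
    moreover have "set Q \<inter> set Q' = {}" using that path_partitionD(2)[OF assms(1,2)] by blast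
    ultimately show ?thesis by simp
  qed
  fix Q1 Q2 assume "Q1 \<in> insert (r # Q) (P - {Q})" "Q2 \<in> insert (r # Q) (P - {Q})" "Q1 \<noteq> Q2"
  then consider "Q1 = r # Q" "Q2 \<in> P - {Q}" | "Q2 = r # Q" "Q1 \<in> P - {Q}" | "Q1 \<in> P" "Q2 \<in> P"
    by (metis DiffD1 insertE)
  then show "set Q1 \<inter> set Q2 = {}"
  proof cases
    case 1
    then show ?thesis using disjoint_new by blast
  next
    case 2
    then show ?thesis using disjoint_new[of Q1] by (simp add: Int_commute)
  next
    case 3
    then show ?thesis using path_partitionD(2)[OF assms(1)] \<open>Q1 \<noteq> Q2\<close> by blast
  qed
next
  show "(\<Union>Q'\<in>insert (r # Q) (P - {Q}). set Q') = insert r W"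
  proof -
    have "P = insert Q (P - {Q})" using assms(2) by blast
    then have "W = set Q \<union> (\<Union>Q'\<in>P - {Q}. set Q')"
      using path_partitionD(4)[OF assms(1)] by (metis UN_insert)
    then show ?thesis by simp
  qed
qed

definition levelled_partition :: "'a set \<Rightarrow> 'a rel \<Rightarrow> 'a list set \<Rightarrow> ('a \<Rightarrow> nat) \<Rightarrow> bool" where
  "levelled_partition W A P h \<longleftrightarrow> path_partition W A P \<and>
     (\<forall>Q\<in>P. \<forall>j<length Q. h (rev Q ! j) = j) \<and> (\<forall>i. acyclic (Restr A {v\<in>W. h v = i}))"

lemma levelled_partitionD:
  assumes "levelled_partition W A P h"
  shows "path_partition W A P"
    and "Q \<in> P \<Longrightarrow> j < length Q \<Longrightarrow> h (rev Q ! j) = j"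
    and "acyclic (Restr A {v\<in>W. h v = i})"
  using assms unfolding levelled_partition_def by blast+

lemma level_less_length:
  assumes "levelled_partition W A P h" and "Q \<in> P" and "v \<in> set Q"
  shows "h v < length Q"
proof -
  obtain j where "j < length Q" "rev Q ! j = v"
    using assms(3) by (metis in_set_conv_nth length_rev set_rev)
  then show ?thesis using levelled_partitionD(2)[OF assms(1,2)] by auto
qed

lemma levelled_partition_empty: "levelled_partition {} A {} h"
  by (simp add: levelled_partition_def path_partition_def acyclic_def)

lemma levelled_partition_singleton:
  assumes "(r, r) \<notin> A"
  shows "levelled_partition {r} A {[r]} (\<lambda>_. 0)"
proof -
  have "Restr A {v\<in>{r}. (0::nat) = i} = {}" for i
    using assms by auto
  then show ?thesis
    by (simp add: levelled_partition_def path_partition_def is_path_def acyclic_def)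
qed

lemma levelled_partition_prepend:
  assumes lp: "levelled_partition W A P h"
    and Q: "Q \<in> P" and longest: "\<forall>Q'\<in>P. length Q' \<le> length Q"
    and "r \<notin> W" and "(r, hd Q) \<in> A" and "(r, r) \<notin> A"
  shows "levelled_partition (insert r W) A (insert (r # Q) (P - {Q})) (h(r := length Q))"
  unfolding levelled_partition_def
proof (intro conjI ballI allI impI)
  note pp = levelled_partitionD(1)[OF lp]
  then show "path_partition (insert r W) A (insert (r # Q) (P - {Q}))"
    using assms(2,4,5) by (rule path_partition_prepend)
  have r_notin: "r \<notin> set Q'" if "Q' \<in> P" for Q'
    using path_partitionD(3)[OF pp that] \<open>r \<notin> W\<close> by blast
  fix Q' j assume "Q' \<in> insert (r # Q) (P - {Q})" and j: "j < length Q'"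
  then consider "Q' = r # Q" | "Q' \<in> P" by blast
  then show "(h(r := length Q)) (rev Q' ! j) = j"
  proof cases
    case 1
    then have "rev Q' ! j = (if j < length Q then rev Q ! j else r)"
      using j by (auto simp: nth_append)
    moreover have "rev Q ! j \<noteq> r" if "j < length Q"
      using that r_notin[OF Q] by (metis length_rev nth_mem set_rev)
    ultimately show ?thesis using levelled_partitionD(2)[OF lp Q] 1 j by auto
  next
    case 2
    then have "rev Q' ! j \<noteq> r" using j r_notin by (metis length_rev nth_mem set_rev)
    then show ?thesis using levelled_partitionD(2)[OF lp 2 j] by simp
  qed
next
  fix i
  have below: "h v < length Q" if v: "v \<in> W" for v
  proof -
    obtain Q' where "Q' \<in> P" "v \<in> set Q'"
      using path_partitionD(4)[OF levelled_partitionD(1)[OF lp]] v by blast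
    then show ?thesis using level_less_length[OF lp] longest by (meson order_less_le_trans)
  qed
  show "acyclic (Restr A {v\<in>insert r W. (h(r := length Q)) v = i})"
  proof (cases "i = length Q")
    case True
    then have "{v\<in>insert r W. (h(r := length Q)) v = i} = {r}" by (auto dest: below)
    then show ?thesis using \<open>(r, r) \<notin> A\<close> by (simp add: acyclic_def Int_absorb2)
  next
    case False
    then have "{v\<in>insert r W. (h(r := length Q)) v = i} = {v\<in>W. h v = i}"
      using \<open>r \<notin> W\<close> by auto
    then show ?thesis using levelled_partitionD(3)[OF lp] by simp
  qed
qed

lemma levelled_partition_Un:
  assumes lT: "levelled_partition T A PT hT" and lR: "levelled_partition R A PR hR"
    and "T \<inter> R = {}" and no_arcs: "A \<inter> T \<times> R = {}"
  shows "levelled_partition (T \<union> R) A (PT \<union> PR) (\<lambda>v. if v \<in> T then hT v else hR v)"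
    (is "levelled_partition _ _ _ ?h")
  unfolding levelled_partition_def
proof (intro conjI ballI allI impI)
  note ppT = levelled_partitionD(1)[OF lT] and ppR = levelled_partitionD(1)[OF lR]
  show "path_partition (T \<union> R) A (PT \<union> PR)"
    using ppT ppR \<open>T \<inter> R = {}\<close> by (rule path_partition_Un)
  fix Q j assume "Q \<in> PT \<union> PR" and j: "j < length Q"
  have "rev Q ! j \<in> set Q" using j by (metis length_rev nth_mem set_rev)
  from \<open>Q \<in> PT \<union> PR\<close> show "?h (rev Q ! j) = j"
  proof
    assume "Q \<in> PT"
    then show ?thesis
      using levelled_partitionD(2)[OF lT _ j] path_partitionD(3)[OF ppT] \<open>rev Q ! j \<in> set Q\<close>
      by auto
  next
    assume "Q \<in> PR"
    then have "rev Q ! j \<notin> T"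
      using path_partitionD(3)[OF ppR] \<open>rev Q ! j \<in> set Q\<close> \<open>T \<inter> R = {}\<close> by blast
    then show ?thesis using levelled_partitionD(2)[OF lR \<open>Q \<in> PR\<close> j] by simp
  qed
next
  fix i
  have "{v\<in>T \<union> R. ?h v = i} = {v\<in>T. hT v = i} \<union> {v\<in>R. hR v = i}"
    using \<open>T \<inter> R = {}\<close> by auto
  moreover have "A \<inter> {v\<in>T. hT v = i} \<times> {v\<in>R. hR v = i} = {}"
    using no_arcs by blast
  ultimately show "acyclic (Restr A {v\<in>T \<union> R. ?h v = i})"
    using levelled_partitionD(3)[OF lT] levelled_partitionD(3)[OF lR]
    by (simp add: acyclic_Un_one_way)
qed

definition longest_starts_in :: "'a set \<Rightarrow> 'a list set \<Rightarrow> bool" where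
  "longest_starts_in S P \<longleftrightarrow> (\<exists>Q\<in>P. hd Q \<in> S \<and> (\<forall>Q'\<in>P. length Q' \<le> length Q))"

lemma longest_starts_in_mono: "longest_starts_in S P \<Longrightarrow> S \<subseteq> S' \<Longrightarrow> longest_starts_in S' P"
  unfolding longest_starts_in_def by blast

lemma longest_starts_in_Un:
  assumes "longest_starts_in S P" and "P' \<noteq> {} \<longrightarrow> longest_starts_in S P'"
  shows "longest_starts_in S (P \<union> P')"
proof (cases "P' = {}")
  case False
  obtain Q where Q: "Q \<in> P" "hd Q \<in> S" "\<forall>Q''\<in>P. length Q'' \<le> length Q"
    using assms(1) unfolding longest_starts_in_def by blast
  obtain Q' where Q': "Q' \<in> P'" "hd Q' \<in> S" "\<forall>Q''\<in>P'. length Q'' \<le> length Q'"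
    using assms(2) False unfolding longest_starts_in_def by blast
  show ?thesis
  proof (cases "length Q \<le> length Q'")
    case True
    then have "\<forall>Q''\<in>P \<union> P'. length Q'' \<le> length Q'" using Q(3) Q'(3) by auto
    then show ?thesis using Q' unfolding longest_starts_in_def by blast
  next
    case False
    then have "\<forall>Q''\<in>P \<union> P'. length Q'' \<le> length Q" using Q(3) Q'(3) by auto
    then show ?thesis using Q unfolding longest_starts_in_def by blast
  qed
qed (use assms(1) in simp)

lemma levelled_partition_add_root:
  assumes lp: "levelled_partition W A P h" and longest: "P \<noteq> {} \<longrightarrow> longest_starts_in (A `` {r}) P"
    and "r \<notin> W" and "(r, r) \<notin> A"
  shows "\<exists>P' h'. levelled_partition (insert r W) A P' h' \<and> longest_starts_in {r} P'"
proof (cases "P = {}")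
  case True
  then have "W = {}" using path_partitionD(4)[OF levelled_partitionD(1)[OF lp]] by simp
  then show ?thesis
    using levelled_partition_singleton[OF \<open>(r, r) \<notin> A\<close>] unfolding longest_starts_in_def by fastforce
next
  case False
  then obtain Q where Q: "Q \<in> P" "(r, hd Q) \<in> A" "\<forall>Q'\<in>P. length Q' \<le> length Q"
    using longest unfolding longest_starts_in_def by blast
  have "levelled_partition (insert r W) A (insert (r # Q) (P - {Q})) (h(r := length Q))"
    using levelled_partition_prepend[OF lp Q(1,3) \<open>r \<notin> W\<close> Q(2) \<open>(r, r) \<notin> A\<close>] .
  moreover have "longest_starts_in {r} (insert (r # Q) (P - {Q}))"
    using Q(3) unfolding longest_starts_in_def by fastforce
  ultimately show ?thesis by blast
qed

lemma reachable_from_root: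
  fixes A :: "'a rel"
  assumes "r \<in> W"
  defines "T \<equiv> (Restr A W)\<^sup>* `` {r}"
  shows "T \<subseteq> W" and "A \<inter> T \<times> (W - T) = {}"
    and "T - {r} \<subseteq> (Restr A (T - {r}))\<^sup>* `` (A `` {r} \<inter> (T - {r}))"
proof -
  show "T \<subseteq> W" using assms(1) unfolding T_def by (auto elim: rtranclE)
  then show "A \<inter> T \<times> (W - T) = {}" unfolding T_def by (blast intro: rtrancl_into_rtrancl)
  have "Restr (Restr A W) (T - {r}) = Restr A (T - {r})" using \<open>T \<subseteq> W\<close> by blast
  moreover have "Restr A W `` {r} - {r} = A `` {r} \<inter> (T - {r})"
    using \<open>T \<subseteq> W\<close> assms(1) unfolding T_def by blast
  ultimately show "T - {r} \<subseteq> (Restr A (T - {r}))\<^sup>* `` (A `` {r} \<inter> (T - {r}))"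
    using rtrancl_Image_minus_root[of "Restr A W" r] unfolding T_def by simp
qed

lemma unreachable_from_root:
  fixes A :: "'a rel" and r :: 'a
  assumes "W \<subseteq> (Restr A W)\<^sup>* `` S"
  defines "T \<equiv> (Restr A W)\<^sup>* `` {r}"
  shows "W - T \<subseteq> (Restr A (W - T))\<^sup>* `` (S - T)"
proof
  fix v assume "v \<in> W - T"
  then obtain s where "s \<in> S" "(s, v) \<in> (Restr A W)\<^sup>*" using assms(1) by blast
  moreover have "Restr A W `` T \<subseteq> T" unfolding T_def by (blast intro: rtrancl_into_rtrancl)
  moreover have "Restr (Restr A W) (- T) = Restr A (W - T)" by blast
  ultimately show "v \<in> (Restr A (W - T))\<^sup>* `` (S - T)"
    using rtrancl_avoiding_closed \<open>v \<in> W - T\<close> by fastforce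
qed

lemma exists_levelled_partition_rooted:
  assumes "finite W" and no_loops: "\<forall>v. (v, v) \<notin> A" and "S \<subseteq> W" and "W \<subseteq> (Restr A W)\<^sup>* `` S"
  shows "\<exists>P h. levelled_partition W A P h \<and> (P \<noteq> {} \<longrightarrow> longest_starts_in S P)"
  using assms(1,3,4)
proof (induction "card W" arbitrary: W S rule: less_induct)
  case less
  show ?case
  proof (cases "W = {}")
    case True
    then show ?thesis using levelled_partition_empty by blast
  next
    case False
    then obtain r where "r \<in> S" using less.prems(3) by blast
    with less.prems(2) have "r \<in> W" by blast
    define T where "T = (Restr A W)\<^sup>* `` {r}"
    note T = reachable_from_root[OF \<open>r \<in> W\<close>, of A, folded T_def]
    have "r \<in> T" unfolding T_def by blast
    have "T - {r} \<subset> W" using T(1) \<open>r \<in> W\<close> by blast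
    then obtain PT' hT' where "levelled_partition (T - {r}) A PT' hT'"
      and "PT' \<noteq> {} \<longrightarrow> longest_starts_in (A `` {r}) PT'"
      using less.hyps[OF psubset_card_mono _ Int_lower2 T(3)] less.prems(1) longest_starts_in_mono
      by (metis finite_subset inf_le1 psubset_imp_subset)
    then obtain PT hT where lT: "levelled_partition T A PT hT" and "longest_starts_in {r} PT"
      using levelled_partition_add_root[of "T - {r}" A PT' hT' r] no_loops \<open>r \<in> T\<close>
      by (metis Diff_iff insertCI insert_Diff)
    have "W - T \<subset> W" using \<open>r \<in> T\<close> \<open>r \<in> W\<close> by blast
    moreover have "S - T \<subseteq> W - T" using less.prems(2) by blast
    ultimately obtain PR hR where lR: "levelled_partition (W - T) A PR hR"
      and "PR \<noteq> {} \<longrightarrow> longest_starts_in (S - T) PR"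
      using less.hyps[OF psubset_card_mono] less.prems(1)
        unreachable_from_root[OF less.prems(3), of r, folded T_def]
      by (meson finite_subset psubset_imp_subset)
    have "levelled_partition W A (PT \<union> PR) (\<lambda>v. if v \<in> T then hT v else hR v)"
      using levelled_partition_Un[OF lT lR _ T(2)] T(1) by (metis Diff_disjoint Diff_partition)
    moreover have "longest_starts_in S (PT \<union> PR)"
      using \<open>longest_starts_in {r} PT\<close> \<open>PR \<noteq> {} \<longrightarrow> longest_starts_in (S - T) PR\<close> \<open>r \<in> S\<close>
      by (meson Diff_subset empty_subsetI insert_subset longest_starts_in_Un longest_starts_in_mono)
    ultimately show ?thesis by blast
  qed
qed

lemma exists_levelled_partition:
  assumes "digraph V A"
  shows "\<exists>P h. levelled_partition V A P h"
  using exists_levelled_partition_rooted[of V A V] assms unfolding digraph_def by blast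

lemma card_levels_on_path:
  assumes "distinct Q" and "\<forall>j<length Q. h (rev Q ! j) = j"
  shows "card {v\<in>set Q. h v \<in> I} = card ({..<length Q} \<inter> I)"
proof -
  have "{v\<in>set Q. h v \<in> I} = (!) (rev Q) ` ({..<length Q} \<inter> I)"
  proof
    show "{v\<in>set Q. h v \<in> I} \<subseteq> (!) (rev Q) ` ({..<length Q} \<inter> I)"
    proof
      fix v assume "v \<in> {v\<in>set Q. h v \<in> I}"
      then obtain j where "j < length Q" "rev Q ! j = v" "h v \<in> I"
        by (metis (no_types, lifting) in_set_conv_nth length_rev mem_Collect_eq set_rev)
      then show "v \<in> (!) (rev Q) ` ({..<length Q} \<inter> I)" using assms(2) by force
    qed
  qed (use assms(2) in \<open>auto simp: rev_nth\<close>)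
  moreover have "inj_on ((!) (rev Q)) ({..<length Q} \<inter> I)"
    using assms(1) by (intro inj_on_nth) auto
  ultimately show ?thesis by (simp add: card_image)
qed

lemma card_levels_Union:
  assumes "levelled_partition W A P h" and "K \<subseteq> P" and "finite K"
  shows "card {v\<in>\<Union>Q\<in>K. set Q. h v \<in> I} = (\<Sum>Q\<in>K. card ({..<length Q} \<inter> I))"
proof -
  note pp = levelled_partitionD(1)[OF assms(1)]
  have "{v\<in>\<Union>Q\<in>K. set Q. h v \<in> I} = (\<Union>Q\<in>K. {v\<in>set Q. h v \<in> I})" by blast
  also have "card \<dots> = (\<Sum>Q\<in>K. card {v\<in>set Q. h v \<in> I})"
    using assms(2,3) path_partitionD(2)[OF pp] by (intro card_UN_disjoint) auto
  also have "\<dots> = (\<Sum>Q\<in>K. card ({..<length Q} \<inter> I))"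
  proof (rule sum.cong)
    fix Q assume "Q \<in> K"
    then have "Q \<in> P" using assms(2) by blast
    then show "card {v\<in>set Q. h v \<in> I} = card ({..<length Q} \<inter> I)"
      using path_partitionD(1)[OF pp] levelled_partitionD(2)[OF assms(1)]
      by (intro card_levels_on_path) (auto simp: is_path_def)
  qed simp
  finally show ?thesis .
qed

lemma path_knorm_levelled_partition:
  assumes "levelled_partition W A P h" and "finite W"
  shows "path_knorm k P = card {v\<in>W. h v < k}"
proof -
  have "finite P" using finite_path_partition[OF assms(2) levelled_partitionD(1)[OF assms(1)]] .
  then have "card {v\<in>\<Union>Q\<in>P. set Q. h v \<in> {..<k}} = path_knorm k P"
    using card_levels_Union[OF assms(1) order_refl, of "{..<k}"]
    by (simp add: path_knorm_def greaterThan_Int_greaterThan)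
  then show ?thesis using path_partitionD(4)[OF levelled_partitionD(1)[OF assms(1)]] by simp
qed

lemma card_level_Union:
  assumes "levelled_partition W A P h" and "K \<subseteq> P" and "finite K"
  shows "card {v\<in>\<Union>Q\<in>K. set Q. h v = i} = card {Q\<in>K. i < length Q}"
proof -
  have "card {v\<in>\<Union>Q\<in>K. set Q. h v \<in> {i}} = (\<Sum>Q\<in>K. if i < length Q then 1 else 0)"
    using card_levels_Union[OF assms, of "{i}"]
    by (simp add: Iio_Int_singleton if_distrib cong: if_cong)
  also have "\<dots> = card {Q\<in>K. i < length Q}"
    using assms(3) by (simp add: sum.If_cases Int_def)
  finally show ?thesis by simp
qed

lemma pi_k_le_path_knorm:
  assumes "finite V" and "path_partition V A P"
  shows "pi_k k V A \<le> path_knorm k P"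
  unfolding pi_k_def using finite_path_partitions[OF assms(1)] assms(2) by (intro Min_le) auto

lemma chi'_k_le_col_knorm:
  assumes "finite V" and "dicoloring V A \<S>"
  shows "chi'_k k V A \<le> col_knorm k \<S>"
proof -
  have "{\<S>. dicoloring V A \<S>} \<subseteq> Pow (Pow V)" unfolding dicoloring_def by blast
  then have "finite {\<S>. dicoloring V A \<S>}" using assms(1) by (meson finite_Pow_iff finite_subset)
  then show ?thesis unfolding chi'_k_def using assms(2) by (intro Min_le) auto
qed

lemma card_le_alpha'_k:
  assumes "finite V" and "partial_dicoloring k V A S"
  shows "card (\<Union>i<k. S i) \<le> alpha'_k k V A"
proof -
  have "{card (\<Union>i<k. S i) | S. partial_dicoloring k V A S} \<subseteq> {..card V}"
    using assms(1) unfolding partial_dicoloring_def acyclic_set_def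
    by (auto intro!: card_mono)
  then show ?thesis
    unfolding alpha'_k_def using assms(2) by (intro Max_ge) (auto intro: finite_subset)
qed

lemma card_le_lambda_k:
  assumes "finite V" and "k_pack k V A P"
  shows "card (\<Union>i<k. set (P i)) \<le> lambda_k k V A"
proof -
  have "(\<Union>i<k. set (P' i)) \<subseteq> V" if "k_pack k V A P'" for P'
    using that unfolding k_pack_def is_path_def by fastforce
  then have "{card (\<Union>i<k. set (P i)) | P. k_pack k V A P} \<subseteq> {..card V}"
    using assms(1) by (auto intro!: card_mono)
  then show ?thesis
    unfolding lambda_k_def using assms(2) by (intro Max_ge) (auto intro: finite_subset)
qed

lemma exists_top_k_subset:
  fixes f :: "'b \<Rightarrow> 'c::linorder"
  assumes "finite P"
  shows "\<exists>K\<subseteq>P. card K \<le> k \<and> (\<forall>i. min (card {x\<in>P. i < f x}) k \<le> card {x\<in>K. i < f x})"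
proof (induction k)
  case 0
  show ?case by auto
next
  case (Suc k)
  then obtain K where K: "K \<subseteq> P" "card K \<le> k"
    "\<forall>i. min (card {x\<in>P. i < f x}) k \<le> card {x\<in>K. i < f x}"
    by blast
  have "finite K" using K(1) assms finite_subset by blast
  show ?case
  proof (cases "K = P")
    case True
    then show ?thesis using K(2) by (intro exI[of _ K]) auto
  next
    case False
    then have "f ` (P - K) \<noteq> {}" "finite (f ` (P - K))" using K(1) assms by auto
    then obtain y where y: "y \<in> P - K" "f y = Max (f ` (P - K))"
      by (metis Max_in imageE)
    have "min (card {x\<in>P. i < f x}) (Suc k) \<le> card {x\<in>insert y K. i < f x}" for i
    proof (cases "i < f y")
      case True
      then have "{x\<in>insert y K. i < f x} = insert y {x\<in>K. i < f x}" by auto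
      then have "card {x\<in>insert y K. i < f x} = Suc (card {x\<in>K. i < f x})"
        using y(1) \<open>finite K\<close> by simp
      then show ?thesis using K(3)[rule_format, of i] by (simp add: min_def split: if_splits)
    next
      case False
      have "f x \<le> f y" if "x \<in> P - K" for x
        using that y(2) \<open>finite (f ` (P - K))\<close> by simp
      with False have "{x\<in>P. i < f x} \<subseteq> {x\<in>insert y K. i < f x}" by fastforce
      then have "card {x\<in>P. i < f x} \<le> card {x\<in>insert y K. i < f x}"
        using \<open>finite K\<close> by (intro card_mono) auto
      then show ?thesis by simp
    qed
    moreover have "card (insert y K) \<le> Suc k" using K(2) \<open>finite K\<close> by (simp add: card_insert_if)
    ultimately show ?thesis using K(1) y(1) by (intro exI[of _ "insert y K"]) auto
  qed
qed

lemma exists_k_pack: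
  assumes "path_partition V A P" and "K \<subseteq> P" and "finite K" and "card K \<le> k"
  shows "\<exists>Pk. k_pack k V A Pk \<and> (\<Union>i<k. set (Pk i)) = (\<Union>Q\<in>K. set Q)"
proof -
  obtain qs where qs: "set qs = K" "distinct qs" using finite_distinct_list[OF assms(3)] by blast
  have "length qs \<le> k" using qs assms(4) distinct_card by metis
  define Pk where "Pk i = (if i < length qs then qs ! i else [])" for i
  have "k_pack k V A Pk"
    unfolding k_pack_def
  proof (intro conjI allI impI)
    fix i assume "i < k"
    show "Pk i = [] \<or> is_path V A (Pk i)"
      using path_partitionD(1)[OF assms(1)] assms(2) qs(1) nth_mem unfolding Pk_def by fastforce
  next
    fix i j assume "i < k" "j < k" "i \<noteq> j"
    show "set (Pk i) \<inter> set (Pk j) = {}"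
    proof (cases "i < length qs \<and> j < length qs")
      case True
      then have "qs ! i \<noteq> qs ! j" using qs(2) \<open>i \<noteq> j\<close> by (simp add: nth_eq_iff_index_eq)
      moreover have "qs ! i \<in> P" "qs ! j \<in> P" using True qs(1) assms(2) by auto
      ultimately show ?thesis using path_partitionD(2)[OF assms(1)] True unfolding Pk_def by simp
    qed (auto simp: Pk_def)
  qed
  moreover have "(\<Union>i<k. set (Pk i)) = (\<Union>i<length qs. set (qs ! i))"
    using \<open>length qs \<le> k\<close> unfolding Pk_def
    by (auto split: if_splits) (meson lessThan_iff order_less_le_trans)
  moreover have "K = (!) qs ` {..<length qs}"
    using qs(1) by (metis atLeast0LessThan map_nth set_map set_upt)
  ultimately show ?thesis by auto
qed

lemma levels_partial_dicoloring:
  assumes "levelled_partition V A P h"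
  shows "partial_dicoloring k V A (\<lambda>i. {v\<in>V. h v = i})"
  using levelled_partitionD(3)[OF assms]
  unfolding partial_dicoloring_def acyclic_set_def by auto

lemma levels_dicoloring:
  assumes "levelled_partition V A P h"
  shows "dicoloring V A ((\<lambda>i. {v\<in>V. h v = i}) ` h ` V)"
  using levelled_partitionD(3)[OF assms]
  unfolding dicoloring_def acyclic_set_def by auto

lemma col_knorm_levels:
  "col_knorm k ((\<lambda>i. {v\<in>V. h v = i}) ` h ` V) = (\<Sum>i\<in>h ` V. min (card {v\<in>V. h v = i}) k)"
proof -
  have "inj_on (\<lambda>i. {v\<in>V. h v = i}) (h ` V)" by (rule inj_onI) blast
  then show ?thesis unfolding col_knorm_def by (simp add: sum.reindex)
qed

lemma card_eq_sum_card_fibres: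
  assumes "finite V" and "X \<subseteq> V"
  shows "card X = (\<Sum>i\<in>h ` V. card {v\<in>X. h v = i})"
proof -
  have "X = (\<Union>i\<in>h ` V. {v\<in>X. h v = i})" using assms(2) by blast
  moreover have "card (\<Union>i\<in>h ` V. {v\<in>X. h v = i}) = (\<Sum>i\<in>h ` V. card {v\<in>X. h v = i})"
    using assms by (intro card_UN_disjoint) (auto intro: finite_subset)
  ultimately show ?thesis by simp
qed

lemma pi_k_le_alpha'_k:
  assumes "digraph V A"
  shows "pi_k k V A \<le> alpha'_k k V A"
proof -
  have "finite V" using assms unfolding digraph_def by blast
  obtain P h where lp: "levelled_partition V A P h"
    using exists_levelled_partition[OF assms] by blast
  have "pi_k k V A \<le> path_knorm k P"
    using pi_k_le_path_knorm[OF \<open>finite V\<close> levelled_partitionD(1)[OF lp]] .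
  also have "\<dots> = card {v\<in>V. h v < k}"
    using path_knorm_levelled_partition[OF lp \<open>finite V\<close>] .
  also have "{v\<in>V. h v < k} = (\<Union>i<k. {v\<in>V. h v = i})" by blast
  also have "card \<dots> \<le> alpha'_k k V A"
    using card_le_alpha'_k[OF \<open>finite V\<close> levels_partial_dicoloring[OF lp]] .
  finally show ?thesis .
qed

lemma chi'_k_le_lambda_k:
  assumes "digraph V A"
  shows "chi'_k k V A \<le> lambda_k k V A"
proof -
  have "finite V" using assms unfolding digraph_def by blast
  obtain P h where lp: "levelled_partition V A P h"
    using exists_levelled_partition[OF assms] by blast
  note pp = levelled_partitionD(1)[OF lp]
  have "finite P" using finite_path_partition[OF \<open>finite V\<close> pp] .
  then obtain K where "K \<subseteq> P" "card K \<le> k"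
    and K: "\<And>i. min (card {Q\<in>P. i < length Q}) k \<le> card {Q\<in>K. i < length Q}"
    using exists_top_k_subset[of P k length] by blast
  have "finite K" using \<open>K \<subseteq> P\<close> \<open>finite P\<close> finite_subset by blast
  define X where "X = (\<Union>Q\<in>K. set Q)"
  have "X \<subseteq> V" using \<open>K \<subseteq> P\<close> path_partitionD(3)[OF pp] unfolding X_def by blast
  have "chi'_k k V A \<le> (\<Sum>i\<in>h ` V. min (card {v\<in>V. h v = i}) k)"
    using chi'_k_le_col_knorm[OF \<open>finite V\<close> levels_dicoloring[OF lp]] col_knorm_levels by metis
  also have "\<dots> \<le> (\<Sum>i\<in>h ` V. card {v\<in>X. h v = i})"
  proof (rule sum_mono)
    fix i
    have "card {v\<in>V. h v = i} = card {Q\<in>P. i < length Q}"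
      using card_level_Union[OF lp order_refl \<open>finite P\<close>] path_partitionD(4)[OF pp] by simp
    moreover have "card {v\<in>X. h v = i} = card {Q\<in>K. i < length Q}"
      using card_level_Union[OF lp \<open>K \<subseteq> P\<close> \<open>finite K\<close>] unfolding X_def by simp
    ultimately show "min (card {v\<in>V. h v = i}) k \<le> card {v\<in>X. h v = i}" using K by simp
  qed
  also have "\<dots> = card X"
    using card_eq_sum_card_fibres[OF \<open>finite V\<close> \<open>X \<subseteq> V\<close>, of h] by simp
  also have "\<dots> \<le> lambda_k k V A"
    using exists_k_pack[OF pp \<open>K \<subseteq> P\<close> \<open>finite K\<close> \<open>card K \<le> k\<close>] card_le_lambda_k[OF \<open>finite V\<close>]
    unfolding X_def by metis
  finally show ?thesis .
qed

theorem mainTheorem1: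
  fixes V :: "'a set" and A :: "'a rel" and k :: nat
  assumes "digraph V A" and "k \<ge> 1"
  shows "pi_k k V A \<le> alpha'_k k V A \<and> chi'_k k V A \<le> lambda_k k V A"
  using pi_k_le_alpha'_k[OF assms(1)] chi'_k_le_lambda_k[OF assms(1)] by blast

end
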